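(* There exist trees $T$ with $n$ nodes (for arbitrarily large $n$) such that, when the edges of $T$ arrive in uniformly random order, the greedy algorithm outputs an orientation with maximum in-degree $\Omega(\log n/\log\log n)$ with high probability.
   Context: Online graph balancing: the edges of an undirected graph $G=(V,E)$ arrive one at a time (here in the order of a uniformly random permutation of $E$), and upon arrival each edge must be irrevocably oriented toward one of its two endpoints; the load of a vertex is its current in-degree, and the objective is the maximum in-degree. The greedy algorithm orients each arriving edge $(u,v)$ toward the endpoint with the smaller current load (in-degree among already-oriented edges), breaking ties uniformly at random. "With high probability" means with probability tending to $1$ as $n\to\infty$. *)

theory Defs
  imports "HOL-Probability.Probability" "HOL-Combinatorics.Multiset_Permutations"
begin

definition simple_graph :: "'a set \<Rightarrow> 'a set set \<Rightarrow> bool" where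
  "simple_graph V E \<longleftrightarrow> finite V \<and> (\<forall>e\<in>E. e \<subseteq> V \<and> card e = 2)"

definition adj :: "'a set set \<Rightarrow> 'a \<Rightarrow> 'a \<Rightarrow> bool" where
  "adj E u v \<longleftrightarrow> {u, v} \<in> E"

definition connected_graph :: "'a set \<Rightarrow> 'a set set \<Rightarrow> bool" where
  "connected_graph V E \<longleftrightarrow> V \<noteq> {} \<and> (\<forall>u\<in>V. \<forall>v\<in>V. (adj E)\<^sup>*\<^sup>* u v)"

definition is_cycle :: "'a set set \<Rightarrow> 'a list \<Rightarrow> bool" where
  "is_cycle E cs \<longleftrightarrow> length cs \<ge> 3 \<and> distinct cs \<and>
     (\<forall>i. Suc i < length cs \<longrightarrow> adj E (cs ! i) (cs ! Suc i)) \<and>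
     adj E (last cs) (hd cs)"

definition acyclic_graph :: "'a set set \<Rightarrow> bool" where
  "acyclic_graph E \<longleftrightarrow> \<not> (\<exists>cs. is_cycle E cs)"

definition is_tree :: "'a set \<Rightarrow> 'a set set \<Rightarrow> bool" where
  "is_tree V E \<longleftrightarrow> simple_graph V E \<and> connected_graph V E \<and> acyclic_graph E"

text \<open>One greedy step: the arriving edge e is oriented toward an endpoint of minimum
  current load (in-degree), ties broken uniformly at random; that endpoint's load grows.\<close>
definition greedy_step :: "'a set \<Rightarrow> ('a \<Rightarrow> nat) \<Rightarrow> ('a \<Rightarrow> nat) pmf" where
  "greedy_step e l = map_pmf (\<lambda>x. l(x := Suc (l x)))
      (pmf_of_set {x \<in> e. \<forall>y\<in>e. l x \<le> l y})"

fun greedy_run :: "'a set list \<Rightarrow> ('a \<Rightarrow> nat) \<Rightarrow> ('a \<Rightarrow> nat) pmf" where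
  "greedy_run [] l = return_pmf l"
| "greedy_run (e # es) l = bind_pmf (greedy_step e l) (greedy_run es)"

definition greedy_random_order :: "'a set set \<Rightarrow> ('a \<Rightarrow> nat) pmf" where
  "greedy_random_order E =
     bind_pmf (pmf_of_set (permutations_of_set E)) (\<lambda>es. greedy_run es (\<lambda>_. 0))"

definition max_load :: "'a set \<Rightarrow> ('a \<Rightarrow> nat) \<Rightarrow> nat" where
  "max_load V l = Max (l ` V)"

end

theory Submission
  imports Defs
begin

(* Take a complete tree of depth L whose inner vertices have q disjoint groups of s children
   each, and give a vertex at depth d the rank L - d. Split the random arrival order into L
   phases of m/L edges. With high probability every group of every vertex is hit during the
   phase of that vertex's rank, so a vertex v of rank k sees at least q >= k - 1 + r edges
   to children there. By induction on the rank, those children already have load k - 1.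
   If v still had load below k at the end of the phase, each of these edges went to v or
   was a tie that v lost, so at least r ties were all lost by v. Ties are fair coin flips,
   so this has probability at most 2^-r. A union bound over all vertices gives load L at
   the root with probability at least 1 - 2 * 2^-L, and the parameters make L of order
   log n / log log n. *)

lemma prob_bind_pmf:
  "measure_pmf.prob (bind_pmf p f) A = measure_pmf.expectation p (\<lambda>x. measure_pmf.prob (f x) A)"
proof -
  have "ennreal (measure_pmf.prob (bind_pmf p f) A) = (\<integral>\<^sup>+x. emeasure (measure_pmf (f x)) A \<partial>measure_pmf p)"
    by (simp add: measure_pmf.emeasure_eq_measure[symmetric])
  also have "\<dots> = ennreal (measure_pmf.expectation p (\<lambda>x. measure_pmf.prob (f x) A))"
    unfolding measure_pmf.emeasure_eq_measure
    by (rule nn_integral_eq_integral) (auto intro!: measure_pmf.integrable_const_bound[where B=1])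
  finally show ?thesis by (simp add: integral_nonneg_AE)
qed

lemma prob_bind_pmf_le:
  assumes "\<And>x. x \<in> set_pmf p \<Longrightarrow> measure_pmf.prob (f x) A \<le> B"
  shows "measure_pmf.prob (bind_pmf p f) A \<le> B"
  unfolding prob_bind_pmf
  by (rule measure_pmf.integral_le_const)
     (auto intro!: measure_pmf.integrable_const_bound[where B=1] AE_pmfI assms)

lemma prob_UN_le:
  assumes "finite I" "\<And>i. i \<in> I \<Longrightarrow> measure_pmf.prob p (A i) \<le> b"
  shows "measure_pmf.prob p (\<Union>i\<in>I. A i) \<le> real (card I) * b"
proof -
  have "measure_pmf.prob p (\<Union>i\<in>I. A i) \<le> (\<Sum>i\<in>I. measure_pmf.prob p (A i))"
    using assms(1) by (intro measure_pmf.finite_measure_subadditive_finite) auto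
  also have "\<dots> \<le> (\<Sum>i\<in>I. b)" using assms(2) by (intro sum_mono) auto
  finally show ?thesis by simp
qed

section \<open>Greedy choices and ties\<close>

definition least_loaded :: "'a set \<Rightarrow> ('a \<Rightarrow> nat) \<Rightarrow> 'a set" where
  "least_loaded e l = {x \<in> e. \<forall>y\<in>e. l x \<le> l y}"

lemma least_loaded_nonempty:
  assumes "finite e" "e \<noteq> {}"
  shows "least_loaded e l \<noteq> {}"
proof -
  have "Min (l ` e) \<in> l ` e" using assms by simp
  then obtain x where "x \<in> e" "l x = Min (l ` e)" by auto
  then have "x \<in> least_loaded e l" using assms by (auto simp: least_loaded_def)
  then show ?thesis by blast
qed

lemma least_loaded_pair:
  "c \<noteq> v \<Longrightarrow> least_loaded {v, c} l = (if l v < l c then {v} else if l c < l v then {c} else {v, c})"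
  by (auto simp: least_loaded_def)

text \<open>Recording the endpoints chosen by the greedy algorithm, not just the final loads, makes
  individual ties visible.\<close>

fun greedy_choices :: "'a set list \<Rightarrow> ('a \<Rightarrow> nat) \<Rightarrow> 'a list pmf" where
  "greedy_choices [] l = return_pmf []"
| "greedy_choices (e # es) l =
     bind_pmf (pmf_of_set (least_loaded e l))
       (\<lambda>x. map_pmf (Cons x) (greedy_choices es (l(x := Suc (l x)))))"

definition loads :: "('a \<Rightarrow> nat) \<Rightarrow> 'a list \<Rightarrow> nat \<Rightarrow> 'a \<Rightarrow> nat" where
  "loads l xs i v = l v + count_list (take i xs) v"

lemma loads_0 [simp]: "loads l xs 0 = l"
  by (simp add: loads_def fun_eq_iff)

lemma loads_Cons_Suc [simp]: "loads l (x # xs) (Suc i) = loads (l(x := Suc (l x))) xs i"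
  by (simp add: loads_def fun_eq_iff)

lemma loads_Suc:
  "i < length xs \<Longrightarrow> loads l xs (Suc i) v = loads l xs i v + (if xs ! i = v then 1 else 0)"
  by (simp add: loads_def take_Suc_conv_app_nth)

lemma loads_mono: "i \<le> j \<Longrightarrow> loads l xs i v \<le> loads l xs j v"
  using take_add[of i "j - i" xs] by (simp add: loads_def)

lemma card_le_loads:
  assumes "\<And>j. j \<in> A \<Longrightarrow> j < i \<and> j < length xs \<and> xs ! j = v"
  shows "card A \<le> loads l xs i v"
proof -
  have "A \<subseteq> {j. j < length (take i xs) \<and> v = take i xs ! j}" using assms by auto
  then have "card A \<le> count_list (take i xs) v"
    unfolding count_list_eq_length_filter length_filter_conv_card by (rule card_mono[rotated]) simp
  then show ?thesis by (simp add: loads_def)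
qed

lemma greedy_run_conv_choices:
  "greedy_run es l = map_pmf (\<lambda>xs. loads l xs (length xs)) (greedy_choices es l)"
proof (induction es arbitrary: l)
  case (Cons e es)
  have "greedy_run (e # es) l =
      bind_pmf (pmf_of_set (least_loaded e l)) (\<lambda>x. greedy_run es (l(x := Suc (l x))))"
    by (simp add: greedy_step_def bind_map_pmf least_loaded_def)
  also have "\<dots> = map_pmf (\<lambda>xs. loads l xs (length xs)) (greedy_choices (e # es) l)"
    unfolding Cons.IH by (simp add: map_bind_pmf pmf.map_comp o_def)
  finally show ?case .
qed simp

lemma greedy_choices_least_loaded:
  assumes "xs \<in> set_pmf (greedy_choices es l)" "\<forall>e\<in>set es. finite e \<and> e \<noteq> {}"
  shows "length xs = length es \<and> (\<forall>i<length es. xs ! i \<in> least_loaded (es ! i) (loads l xs i))"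
  using assms
proof (induction es arbitrary: l xs)
  case (Cons e es)
  have "least_loaded e l \<noteq> {}" "finite (least_loaded e l)"
    using Cons.prems(2) least_loaded_nonempty by (auto simp: least_loaded_def)
  with Cons.prems(1) obtain x ys where xs: "xs = x # ys" and x: "x \<in> least_loaded e l"
    and ys: "ys \<in> set_pmf (greedy_choices es (l(x := Suc (l x))))"
    by auto
  have "\<forall>e\<in>set es. finite e \<and> e \<noteq> {}" using Cons.prems(2) by simp
  note IH = Cons.IH[OF ys this]
  show ?case
  proof (intro conjI allI impI)
    show "length xs = length (e # es)" using IH xs by simp
    fix i assume "i < length (e # es)"
    then show "xs ! i \<in> least_loaded ((e # es) ! i) (loads l xs i)"
    proof (cases i)
      case (Suc k)
      then have "k < length es" using \<open>i < length (e # es)\<close> by simp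
      then show ?thesis using IH by (simp only: xs Suc nth_Cons_Suc loads_Cons_Suc)
    qed (use x xs in simp)
  qed
qed simp

definition tie :: "('a \<Rightarrow> nat) \<Rightarrow> 'a set list \<Rightarrow> 'a list \<Rightarrow> 'a \<Rightarrow> nat \<Rightarrow> bool" where
  "tie l es xs v i \<longleftrightarrow>
     v \<in> least_loaded (es ! i) (loads l xs i) \<and> card (least_loaded (es ! i) (loads l xs i)) = 2"

definition loses_ties :: "('a \<Rightarrow> nat) \<Rightarrow> 'a set list \<Rightarrow> 'a \<Rightarrow> nat set \<Rightarrow> nat \<Rightarrow> 'a list set" where
  "loses_ties l es v S r =
     {xs. (\<forall>i\<in>S. tie l es xs v i \<longrightarrow> xs ! i \<noteq> v) \<and> r \<le> card {i\<in>S. tie l es xs v i}}"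

lemma vimage_Cons_loses_ties:
  fixes l :: "'a \<Rightarrow> nat" and e :: "'a set" and x :: 'a and S :: "nat set"
  defines "M \<equiv> least_loaded e l" and "l' \<equiv> l(x := Suc (l x))" and "S' \<equiv> {i. Suc i \<in> S}"
  assumes "finite S"
  shows "Cons x -` loses_ties l (e # es) v S r =
    (if 0 \<in> S \<and> v \<in> M \<and> card M = 2
     then (if x = v then {} else loses_ties l' es v S' (r - 1))
     else loses_ties l' es v S' r)"
proof -
  define t0 where "t0 \<longleftrightarrow> 0 \<in> S \<and> v \<in> M \<and> card M = 2"
  have tie_0: "tie l (e # es) (x # ys) v 0 \<longleftrightarrow> v \<in> M \<and> card M = 2" for ys
    by (simp add: tie_def M_def)
  have tie_Suc: "tie l (e # es) (x # ys) v (Suc i) \<longleftrightarrow> tie l' es ys v i" for ys i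
    by (simp add: tie_def l'_def)
  have ball_S: "(\<forall>i\<in>S. P i) \<longleftrightarrow> (0 \<in> S \<longrightarrow> P 0) \<and> (\<forall>i\<in>S'. P (Suc i))" for P
  proof
    assume H: "(0 \<in> S \<longrightarrow> P 0) \<and> (\<forall>i\<in>S'. P (Suc i))"
    show "\<forall>i\<in>S. P i"
    proof
      fix i assume "i \<in> S" then show "P i" using H by (cases i) (auto simp: S'_def)
    qed
  qed (simp add: S'_def)
  have "{i\<in>S. tie l (e # es) (x # ys) v i} =
      (if t0 then {0} else {}) \<union> Suc ` {i\<in>S'. tie l' es ys v i}" for ys
  proof (rule set_eqI)
    fix i show "i \<in> {i\<in>S. tie l (e # es) (x # ys) v i} \<longleftrightarrow>
        i \<in> (if t0 then {0} else {}) \<union> Suc ` {i\<in>S'. tie l' es ys v i}"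
      by (cases i) (auto simp: t0_def tie_0 tie_Suc S'_def)
  qed
  moreover have "finite S'"
    using finite_vimageI[OF assms(4) inj_Suc] by (simp add: S'_def vimage_def)
  ultimately have card_ties: "card {i\<in>S. tie l (e # es) (x # ys) v i} =
      (if t0 then 1 else 0) + card {i\<in>S'. tie l' es ys v i}" for ys
    by (simp add: card_image)
  have lost: "(\<forall>i\<in>S. tie l (e # es) (x # ys) v i \<longrightarrow> (x # ys) ! i \<noteq> v) \<longleftrightarrow>
      (t0 \<longrightarrow> x \<noteq> v) \<and> (\<forall>i\<in>S'. tie l' es ys v i \<longrightarrow> ys ! i \<noteq> v)" for ys
    unfolding ball_S tie_0 tie_Suc t0_def by auto
  show ?thesis
    unfolding t0_def[symmetric]
    by (rule set_eqI) (auto simp: loses_ties_def card_ties lost)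
qed

lemma prob_loses_ties_le:
  assumes "S \<subseteq> {..<length es}"
  shows "measure_pmf.prob (greedy_choices es l) (loses_ties l es v S r) \<le> (1/2) ^ r"
  using assms
proof (induction es arbitrary: l S r)
  case Nil
  then show ?case by (cases r) (auto simp: loses_ties_def)
next
  case (Cons e es)
  define M where "M = least_loaded e l"
  define S' where "S' = {i. Suc i \<in> S}"
  have "S' \<subseteq> {..<length es}" using Cons.prems by (auto simp: S'_def)
  note IH = Cons.IH[OF this]
  have "finite S" using Cons.prems finite_subset by blast
  note vimage = vimage_Cons_loses_ties[where e=e and l=l, OF this, folded M_def S'_def]
  let ?f = "\<lambda>x. measure_pmf.prob (greedy_choices es (l(x := Suc (l x))))
                 (Cons x -` loses_ties l (e # es) v S r)"
  have prob_eq: "measure_pmf.prob (greedy_choices (e # es) l) (loses_ties l (e # es) v S r) =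
      measure_pmf.expectation (pmf_of_set M) ?f"
    by (simp add: prob_bind_pmf M_def measure_map_pmf)
  show ?case
  proof (cases "0 \<in> S \<and> v \<in> M \<and> card M = 2 \<and> r > 0")
    case True
    then obtain a b where ab: "M = {a, b}" "a \<noteq> b" by (auto simp: card_2_iff)
    define w where "w = (if v = a then b else a)"
    have M: "M = {v, w}" "w \<noteq> v" using ab True by (auto simp: w_def)
    have "?f v = 0" using True by (simp add: vimage)
    moreover have "?f w \<le> (1/2) ^ (r - 1)" using True M IH by (simp add: vimage)
    ultimately have "measure_pmf.expectation (pmf_of_set M) ?f \<le> (1/2) ^ (r - 1) / 2"
      using M by (simp add: integral_pmf_of_set)
    also have "\<dots> = (1/2) ^ r" using True by (cases r) simp_all
    finally show ?thesis using prob_eq by simp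
  next
    case False
    then have "?f x \<le> (1/2) ^ r" for x
      using IH by (cases "r = 0") (auto simp: vimage)
    then show ?thesis
      unfolding greedy_choices.simps by (intro prob_bind_pmf_le) (simp add: measure_map_pmf M_def)
  qed
qed

lemma phase_gain:
  assumes greedy: "\<forall>i<length es. xs ! i \<in> least_loaded (es ! i) (loads (\<lambda>_. 0) xs i)"
    and len: "length xs = length es" and b: "b \<le> length es"
    and P: "\<And>i. i \<in> P \<Longrightarrow>
      a \<le> i \<and> i < b \<and> (\<exists>c. es ! i = {v, c} \<and> c \<noteq> v \<and> k \<le> loads (\<lambda>_. 0) xs a c)"
    and many: "k + r \<le> card P"
    and not_lost: "xs \<notin> loses_ties (\<lambda>_. 0) es v P r"
  shows "Suc k \<le> loads (\<lambda>_. 0) xs b v"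
proof (rule ccontr)
  let ?ld = "loads (\<lambda>_. 0) xs"
  assume "\<not> Suc k \<le> ?ld b v"
  then have low: "?ld b v \<le> k" by simp
  have finP: "finite P" using P by (intro finite_subset[of P "{..<b}"]) auto
  have rival: "\<exists>c. es ! i = {v, c} \<and> c \<noteq> v \<and> ?ld i v \<le> ?ld i c \<and> k \<le> ?ld i c"
    if "i \<in> P" for i
  proof -
    obtain c where c: "es ! i = {v, c}" "c \<noteq> v" "k \<le> ?ld a c" using P[OF \<open>i \<in> P\<close>] by blast
    have "k \<le> ?ld i c" using c(3) loads_mono[of a i] P[OF \<open>i \<in> P\<close>] by (meson le_trans)
    moreover have "?ld i v \<le> k" using low loads_mono[of i b] P[OF \<open>i \<in> P\<close>] by (meson le_trans less_imp_le)
    ultimately show ?thesis using c by auto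
  qed
  have lost: "\<forall>i\<in>P. tie (\<lambda>_. 0) es xs v i \<longrightarrow> xs ! i \<noteq> v"
  proof (intro ballI impI notI)
    fix i assume i: "i \<in> P" and t: "tie (\<lambda>_. 0) es xs v i" and won: "xs ! i = v"
    obtain c where c: "es ! i = {v, c}" "c \<noteq> v" "?ld i v \<le> ?ld i c" "k \<le> ?ld i c"
      using rival[OF i] by blast
    \<comment> \<open>a tie means equal loads, so winning it lifts v above k inside the phase\<close>
    have "?ld i v = ?ld i c" using t c by (auto simp: tie_def least_loaded_pair split: if_splits)
    then have "Suc k \<le> ?ld (Suc i) v" using c(4) won P[OF i] b len by (simp add: loads_Suc)
    also have "\<dots> \<le> ?ld b v" using P[OF i] by (intro loads_mono) simp
    finally show False using low by simp
  qed
  have won: "xs ! i = v" if i: "i \<in> P" and no_tie: "\<not> tie (\<lambda>_. 0) es xs v i" for i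
  proof -
    obtain c where c: "es ! i = {v, c}" "c \<noteq> v" "?ld i v \<le> ?ld i c" using rival[OF i] by blast
    have "i < length es" using P[OF i] b by simp
    then have "xs ! i \<in> least_loaded {v, c} (?ld i)" using greedy c(1) by metis
    then show ?thesis using c no_tie by (auto simp: tie_def least_loaded_pair split: if_splits)
  qed
  define T where "T = {i\<in>P. tie (\<lambda>_. 0) es xs v i}"
  have "card T < r" using not_lost lost by (simp add: loses_ties_def T_def)
  moreover have "card (P - T) \<le> ?ld b v"
    using P won len b by (intro card_le_loads) (fastforce simp: T_def)
  moreover have "card P = card T + card (P - T)"
    using card_Int_Diff[OF finP, of T] by (simp add: T_def Int_absorb1)
  ultimately show False using many low by linarith
qed

section \<open>Windows of a random permutation\<close>

lemma prob_prefix_avoids_le: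
  assumes "finite A" "T \<subseteq> A"
  shows "measure_pmf.prob (pmf_of_set (permutations_of_set A)) {es. set (take w es) \<inter> T = {}}
         \<le> (1 - real (card T) / real (card A)) ^ w"
  using assms
proof (induction w arbitrary: A)
  case (Suc w)
  show ?case
  proof (cases "A = {}")
    case False
    define m where "m = card A"
    define t where "t = card T"
    define c where "c = (1 - real t / real (m - 1)) ^ w"
    have m0: "m > 0" using False Suc.prems by (simp add: m_def card_gt_0_iff)
    have tm: "t \<le> m" using Suc.prems by (simp add: t_def m_def card_mono)
    have first: "measure_pmf.prob (pmf_of_set (permutations_of_set (A - {x})))
                (Cons x -` {es. set (take (Suc w) es) \<inter> T = {}}) \<le> (if x \<in> T then 0 else c)"
      if "x \<in> A" for x
    proof (cases "x \<in> T")
      case False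
      then have "Cons x -` {es. set (take (Suc w) es) \<inter> T = {}} = {es. set (take w es) \<inter> T = {}}"
        by auto
      moreover have "T \<subseteq> A - {x}" "card (A - {x}) = m - 1"
        using Suc.prems False that by (auto simp: m_def)
      ultimately show ?thesis using Suc.IH[of "A - {x}"] Suc.prems False by (simp add: c_def t_def)
    qed simp
    have "measure_pmf.prob (pmf_of_set (permutations_of_set A)) {es. set (take (Suc w) es) \<inter> T = {}}
        = (\<Sum>x\<in>A. measure_pmf.prob (pmf_of_set (permutations_of_set (A - {x})))
                (Cons x -` {es. set (take (Suc w) es) \<inter> T = {}})) / m"
      using random_permutation_of_set[OF Suc.prems(1) False] False Suc.prems
      by (simp add: map_pmf_def[symmetric] prob_bind_pmf measure_map_pmf integral_pmf_of_set m_def)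
    also have "\<dots> \<le> (\<Sum>x\<in>A. if x \<in> T then 0 else c) / m"
      using first by (intro divide_right_mono sum_mono) auto
    also have "\<dots> = real (m - t) * c / m"
      using Suc.prems finite_subset[OF Suc.prems(2)]
      by (simp add: sum.If_cases Diff_eq[symmetric] Int_absorb1 card_Diff_subset m_def t_def)
    also have "\<dots> \<le> (1 - real t / real m) ^ Suc w"
    proof (cases "t = m")
      case False
      have "c \<le> (1 - real t / real m) ^ w"
      proof (cases "m = 1")
        case False
        then have "0 < real (m - 1)" "t \<le> m - 1" using m0 \<open>t \<noteq> m\<close> tm by auto
        then show ?thesis
          unfolding c_def by (intro power_mono diff_left_mono divide_left_mono) (auto simp: field_simps)
      qed (use \<open>t \<noteq> m\<close> tm in \<open>simp add: c_def\<close>)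
      moreover have "0 \<le> 1 - real t / real m" using tm m0 by (simp add: field_simps)
      moreover have "real (m - t) * c / m = (1 - real t / real m) * c"
        using m0 tm by (simp add: field_simps of_nat_diff)
      ultimately show ?thesis by (simp add: mult_left_mono)
    qed simp
    finally show ?thesis by (simp add: m_def t_def)
  qed (use Suc.prems in simp)
qed simp

lemma map_pmf_rotate_permutations:
  assumes "finite A" "a < card A"
  shows "map_pmf (rotate a) (pmf_of_set (permutations_of_set A)) = pmf_of_set (permutations_of_set A)"
proof -
  let ?P = "permutations_of_set A"
  have rotate_back: "rotate (card A - a) (rotate a xs) = xs" if "xs \<in> ?P" for xs
    using length_finite_permutations_of_set[OF that] assms(2) by (simp add: rotate_rotate rotate_id)
  have inj: "inj_on (rotate a) ?P"
    using rotate_back by (rule inj_on_inverseI)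
  have image: "rotate a ` ?P = ?P"
  proof
    show "rotate a ` ?P \<subseteq> ?P" by (auto simp: permutations_of_set_def)
    show "?P \<subseteq> rotate a ` ?P"
    proof
      fix xs assume xs: "xs \<in> ?P"
      have "rotate a (rotate (card A - a) xs) = xs"
        using length_finite_permutations_of_set[OF xs] assms(2) by (simp add: rotate_rotate rotate_id)
      moreover have "rotate (card A - a) xs \<in> ?P" using xs by (auto simp: permutations_of_set_def)
      ultimately show "xs \<in> rotate a ` ?P" by (metis image_eqI)
    qed
  qed
  show ?thesis
    using map_pmf_of_set_inj[OF inj _ finite_permutations_of_set] assms(1) image
    by (simp add: permutations_of_set_empty_iff)
qed

lemma in_set_take_rotate:
  assumes "a + w \<le> length xs"
  shows "x \<in> set (take w (rotate a xs)) \<longleftrightarrow> (\<exists>i. a \<le> i \<and> i < a + w \<and> xs ! i = x)"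
proof -
  have "take w (rotate a xs) = take w (drop a xs)"
    using assms by (cases "w = 0") (simp_all add: rotate_drop_take)
  then have "x \<in> set (take w (rotate a xs)) \<longleftrightarrow> (\<exists>i<w. xs ! (a + i) = x)"
    using assms by (auto simp: in_set_conv_nth)
  also have "\<dots> \<longleftrightarrow> (\<exists>i. a \<le> i \<and> i < a + w \<and> xs ! i = x)"
    by (metis add.commute le_add2 le_add_diff_inverse2 nat_add_left_cancel_less)
  finally show ?thesis .
qed

lemma prob_window_avoids_le:
  assumes "finite A" "T \<subseteq> A" "a + w \<le> card A"
  shows "measure_pmf.prob (pmf_of_set (permutations_of_set A))
           {es. \<forall>i. a \<le> i \<and> i < a + w \<longrightarrow> es ! i \<notin> T}
         \<le> (1 - real (card T) / real (card A)) ^ w"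
proof (cases "w = 0")
  case False
  then have a: "a < card A" using assms(3) by simp
  let ?p = "pmf_of_set (permutations_of_set A)"
  have set_p: "set_pmf ?p = permutations_of_set A"
    using assms(1) by (simp add: permutations_of_set_empty_iff finite_permutations_of_set)
  have "measure_pmf.prob ?p {es. \<forall>i. a \<le> i \<and> i < a + w \<longrightarrow> es ! i \<notin> T}
      = measure_pmf.prob ?p {es. set (take w (rotate a es)) \<inter> T = {}}"
  proof (rule measure_pmf.finite_measure_eq_AE)
    show "AE es in measure_pmf ?p. (es \<in> {es. \<forall>i. a \<le> i \<and> i < a + w \<longrightarrow> es ! i \<notin> T}) \<longleftrightarrow>
        (es \<in> {es. set (take w (rotate a es)) \<inter> T = {}})"
    proof (rule AE_pmfI)
      fix es assume "es \<in> set_pmf ?p"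
      then have "a + w \<le> length es"
        using assms(3) by (simp add: set_p length_finite_permutations_of_set)
      then show "(es \<in> {es. \<forall>i. a \<le> i \<and> i < a + w \<longrightarrow> es ! i \<notin> T}) \<longleftrightarrow>
          (es \<in> {es. set (take w (rotate a es)) \<inter> T = {}})"
        by (auto simp: disjoint_iff in_set_take_rotate)
    qed
  qed simp_all
  also have "\<dots> = measure_pmf.prob (map_pmf (rotate a) ?p) {es. set (take w es) \<inter> T = {}}"
    by (simp add: measure_map_pmf vimage_def)
  also have "\<dots> \<le> (1 - real (card T) / real (card A)) ^ w"
    unfolding map_pmf_rotate_permutations[OF assms(1) a] by (rule prob_prefix_avoids_le[OF assms(1,2)])
  finally show ?thesis .
qed simp

section \<open>Trees given by a parent map\<close>

context
  fixes V :: "'a set" and root :: 'a and parent :: "'a \<Rightarrow> 'a" and height :: "'a \<Rightarrow> nat"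
  assumes parent: "\<And>x. x \<in> V \<Longrightarrow> x \<noteq> root \<Longrightarrow> parent x \<in> V \<and> height (parent x) < height x"
begin

lemma adj_parent_edges_lower:
  assumes "adj ((\<lambda>x. {x, parent x}) ` (V - {root})) a b" "height b \<le> height a"
  shows "b = parent a"
proof -
  from assms(1) obtain z where z: "z \<in> V" "z \<noteq> root" "{a, b} = {z, parent z}"
    by (auto simp: adj_def)
  then have "(a = z \<and> b = parent z) \<or> (a = parent z \<and> b = z)" by (auto simp: doubleton_eq_iff)
  then show ?thesis using parent[OF z(1,2)] assms(2) by auto
qed

lemma acyclic_parent_edges: "acyclic_graph ((\<lambda>x. {x, parent x}) ` (V - {root}))"
  unfolding acyclic_graph_def
proof
  let ?E = "(\<lambda>x. {x, parent x}) ` (V - {root})"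
  assume "\<exists>cs. is_cycle ?E cs"
  then obtain cs where cyc: "is_cycle ?E cs" by blast
  define n where "n = length cs"
  define succ where "succ = (\<lambda>i. if Suc i < n then Suc i else 0)"
  have n3: "n \<ge> 3" and dist: "distinct cs" using cyc by (auto simp: is_cycle_def n_def)
  have adj_next: "adj ?E (cs ! i) (cs ! succ i)" if "i < n" for i
  proof (cases "Suc i < n")
    case False
    then have "i = n - 1" "cs \<noteq> []" using that n3 by (auto simp: n_def)
    then show ?thesis using cyc False by (simp add: is_cycle_def succ_def n_def last_conv_nth hd_conv_nth)
  qed (use cyc in \<open>simp add: is_cycle_def succ_def n_def\<close>)
  \<comment> \<open>both cycle neighbours of a highest vertex must be its parent\<close>
  have "Max ((\<lambda>j. height (cs ! j)) ` {..<n}) \<in> (\<lambda>j. height (cs ! j)) ` {..<n}"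
    using n3 by (intro Max_in) (auto simp: lessThan_empty_iff)
  then obtain i where "i < n" "height (cs ! i) = Max ((\<lambda>j. height (cs ! j)) ` {..<n})" by auto
  then have i: "i < n" "\<And>j. j < n \<Longrightarrow> height (cs ! j) \<le> height (cs ! i)"
    by (auto intro!: Max_ge)
  define prev where "prev = (if i = 0 then n - 1 else i - 1)"
  have prev: "prev < n" "succ prev = i" using i n3 by (auto simp: prev_def succ_def)
  have "succ i < n" using n3 by (simp add: succ_def)
  then have "cs ! succ i = parent (cs ! i)"
    using adj_parent_edges_lower adj_next[OF i(1)] i(2) by blast
  moreover have "cs ! prev = parent (cs ! i)"
    using adj_parent_edges_lower adj_next[OF prev(1)] i(2)[OF prev(1)] prev(2)
    by (metis adj_def insert_commute)
  ultimately have "succ i = prev"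
    using nth_eq_iff_index_eq[OF dist, of "succ i" prev] \<open>succ i < n\<close> prev(1) by (simp add: n_def)
  then show False using i n3 by (auto simp: succ_def prev_def split: if_splits)
qed

lemma is_tree_parent_edges:
  assumes "finite V" "root \<in> V"
  shows "is_tree V ((\<lambda>x. {x, parent x}) ` (V - {root}))"
proof -
  let ?E = "(\<lambda>x. {x, parent x}) ` (V - {root})"
  have "card {x, parent x} = 2" if "x \<in> V" "x \<noteq> root" for x
    using parent[OF that] by (cases "parent x = x") auto
  then have "simple_graph V ?E" using assms(1) parent by (auto simp: simple_graph_def)
  moreover have to_root: "(adj ?E)\<^sup>*\<^sup>* x root" if "x \<in> V" for x
    using that
  proof (induction "height x" arbitrary: x rule: less_induct)
    case less
    show ?case
    proof (cases "x = root")
      case False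
      then have "adj ?E x (parent x)" using less.prems by (auto simp: adj_def)
      then show ?thesis
        using less.hyps parent[OF less.prems False] by (meson converse_rtranclp_into_rtranclp)
    qed simp
  qed
  have "symp (adj ?E)" by (auto intro: sympI simp: adj_def insert_commute)
  then have "connected_graph V ?E"
    using assms(2) to_root by (auto simp: connected_graph_def intro: rtranclp_trans symp_rtranclp[THEN sympD])
  ultimately show ?thesis using acyclic_parent_edges by (simp add: is_tree_def)
qed

end

section \<open>Phases and ranks\<close>

locale ranked_edges =
  fixes E :: "'a set set" and rank :: "'a \<Rightarrow> nat" and L :: nat
  assumes finite_E: "finite E" and card_edge: "\<And>e. e \<in> E \<Longrightarrow> card e = 2" and L_pos: "0 < L"
begin

definition phase_end :: "nat \<Rightarrow> nat" where
  "phase_end k = k * card E div L"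

definition down_arrivals :: "'a set list \<Rightarrow> 'a \<Rightarrow> nat set" where
  "down_arrivals es v = {i. phase_end (rank v - 1) \<le> i \<and> i < phase_end (rank v) \<and>
     (\<exists>c. es ! i = {v, c} \<and> c \<noteq> v \<and> rank c = rank v - 1)}"

lemma phase_end_mono: "k \<le> k' \<Longrightarrow> phase_end k \<le> phase_end k'"
  unfolding phase_end_def by (intro div_le_mono mult_right_mono) auto

lemma phase_end_L: "phase_end L = card E"
  using L_pos by (simp add: phase_end_def)

lemma phase_end_le: "k \<le> L \<Longrightarrow> phase_end k \<le> card E"
  using phase_end_mono phase_end_L by metis

lemma phase_length_ge: "1 \<le> k \<Longrightarrow> card E div L \<le> phase_end k - phase_end (k - 1)"
proof -
  assume "1 \<le> k"
  then have "phase_end k = ((k - 1) * card E + card E) div L"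
    by (cases k) (simp_all add: phase_end_def algebra_simps)
  moreover have "(k - 1) * card E div L + card E div L \<le> ((k - 1) * card E + card E) div L"
    by (subst div_add1_eq) simp
  ultimately show ?thesis by (simp add: phase_end_def)
qed

lemma rank_le_loads:
  assumes greedy: "\<forall>i<length es. xs ! i \<in> least_loaded (es ! i) (loads (\<lambda>_. 0) xs i)"
    and len: "length xs = length es" "length es = card E"
    and enough: "\<And>u. 1 \<le> rank u \<Longrightarrow> rank u \<le> L \<Longrightarrow> rank u - 1 + r \<le> card (down_arrivals es u)"
    and not_lost: "\<And>u. 1 \<le> rank u \<Longrightarrow> rank u \<le> L \<Longrightarrow>
      xs \<notin> loses_ties (\<lambda>_. 0) es u (down_arrivals es u) r"
    and "rank v \<le> L"
  shows "rank v \<le> loads (\<lambda>_. 0) xs (phase_end (rank v)) v"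
proof -
  have "\<forall>v. rank v = k \<longrightarrow> k \<le> L \<longrightarrow> k \<le> loads (\<lambda>_. 0) xs (phase_end k) v" for k
  proof (induction k)
    case (Suc k)
    show ?case
    proof (intro allI impI)
      fix v assume v: "rank v = Suc k" "Suc k \<le> L"
      show "Suc k \<le> loads (\<lambda>_. 0) xs (phase_end (Suc k)) v"
      proof (rule phase_gain[OF greedy len(1)])
        show "phase_end (Suc k) \<le> length es" using phase_end_le v len by simp
        show "k + r \<le> card (down_arrivals es v)" using enough[of v] v by simp
        show "xs \<notin> loses_ties (\<lambda>_. 0) es v (down_arrivals es v) r" using not_lost[of v] v by simp
        fix i assume "i \<in> down_arrivals es v"
        then show "phase_end k \<le> i \<and> i < phase_end (Suc k) \<and>
            (\<exists>c. es ! i = {v, c} \<and> c \<noteq> v \<and> k \<le> loads (\<lambda>_. 0) xs (phase_end k) c)"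
          using Suc.IH v by (auto simp: down_arrivals_def)
      qed
    qed
  qed simp
  then show ?thesis using assms(6) by simp
qed

end

locale ranked_edge_groups = ranked_edges +
  fixes group :: "'a \<Rightarrow> nat \<Rightarrow> 'a set set" and q s :: nat
  assumes finite_ranked: "finite {v. 1 \<le> rank v \<and> rank v \<le> L}"
    and group_down_edges: "\<And>v g e. 1 \<le> rank v \<Longrightarrow> rank v \<le> L \<Longrightarrow> g < q \<Longrightarrow> e \<in> group v g \<Longrightarrow>
      e \<in> E \<and> (\<exists>c. e = {v, c} \<and> c \<noteq> v \<and> rank c = rank v - 1)"
    and card_group: "\<And>v g. 1 \<le> rank v \<Longrightarrow> rank v \<le> L \<Longrightarrow> g < q \<Longrightarrow> s \<le> card (group v g)"
    and disjoint_groups: "\<And>v g g'. 1 \<le> rank v \<Longrightarrow> rank v \<le> L \<Longrightarrow> g < q \<Longrightarrow> g' < q \<Longrightarrow> g \<noteq> g' \<Longrightarrow>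
      group v g \<inter> group v g' = {}"
begin

abbreviation ranked :: "'a set" where
  "ranked \<equiv> {v. 1 \<le> rank v \<and> rank v \<le> L}"

definition misses_group :: "'a \<Rightarrow> nat \<Rightarrow> 'a set list set" where
  "misses_group v g =
     {es. \<forall>i. phase_end (rank v - 1) \<le> i \<and> i < phase_end (rank v) \<longrightarrow> es ! i \<notin> group v g}"

definition bad_orders :: "'a set list set" where
  "bad_orders = (\<Union>v\<in>ranked. \<Union>g<q. misses_group v g)"

lemma prob_misses_group_le:
  assumes "v \<in> ranked" "g < q"
  shows "measure_pmf.prob (pmf_of_set (permutations_of_set E)) (misses_group v g)
           \<le> (1 - real s / real (card E)) ^ (card E div L)"
proof -
  let ?a = "phase_end (rank v - 1)" and ?w = "phase_end (rank v) - phase_end (rank v - 1)"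
  have T: "group v g \<subseteq> E" using group_down_edges assms by auto
  then have sT: "s \<le> card (group v g)" "card (group v g) \<le> card E"
    using card_group assms finite_E by (auto intro: card_mono)
  have "real (card (group v g)) / real (card E) \<le> 1" "real s / real (card E) \<le> 1"
    using sT by (cases "card E = 0"; simp add: field_simps)+
  have "?a \<le> phase_end (rank v)" by (intro phase_end_mono) simp
  then have "misses_group v g = {es. \<forall>i. ?a \<le> i \<and> i < ?a + ?w \<longrightarrow> es ! i \<notin> group v g}"
    by (simp add: misses_group_def)
  also have "measure_pmf.prob (pmf_of_set (permutations_of_set E)) \<dots>
      \<le> (1 - real (card (group v g)) / real (card E)) ^ ?w"
    using phase_end_le[of "rank v"] assms \<open>?a \<le> phase_end (rank v)\<close>
    by (intro prob_window_avoids_le[OF finite_E T]) auto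
  also have "\<dots> \<le> (1 - real s / real (card E)) ^ ?w"
    using sT \<open>real (card (group v g)) / real (card E) \<le> 1\<close>
    by (intro power_mono diff_left_mono divide_right_mono) auto
  also have "\<dots> \<le> (1 - real s / real (card E)) ^ (card E div L)"
    using sT \<open>real s / real (card E) \<le> 1\<close> phase_length_ge[of "rank v"] assms(1)
    by (intro power_decreasing) auto
  finally show ?thesis .
qed

lemma prob_bad_orders_le:
  "measure_pmf.prob (pmf_of_set (permutations_of_set E)) bad_orders
     \<le> card ranked * (q * (1 - real s / real (card E)) ^ (card E div L))"
  unfolding bad_orders_def
proof (intro prob_UN_le finite_ranked)
  fix v assume "v \<in> ranked"
  then have "measure_pmf.prob (pmf_of_set (permutations_of_set E)) (\<Union>g<q. misses_group v g)
      \<le> real (card {..<q}) * (1 - real s / real (card E)) ^ (card E div L)"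
    by (intro prob_UN_le) (auto intro: prob_misses_group_le)
  then show "measure_pmf.prob (pmf_of_set (permutations_of_set E)) (\<Union>g<q. misses_group v g)
      \<le> q * (1 - real s / real (card E)) ^ (card E div L)" by simp
qed

lemma card_down_arrivals_ge:
  assumes "es \<notin> bad_orders" "v \<in> ranked"
  shows "q \<le> card (down_arrivals es v)"
proof -
  have "\<exists>i. phase_end (rank v - 1) \<le> i \<and> i < phase_end (rank v) \<and> es ! i \<in> group v g"
    if "g < q" for g
    using assms that by (auto simp: bad_orders_def misses_group_def)
  then obtain hit where hit: "\<And>g. g < q \<Longrightarrow>
      phase_end (rank v - 1) \<le> hit g \<and> hit g < phase_end (rank v) \<and> es ! hit g \<in> group v g"
    by metis
  have "inj_on hit {..<q}"
    using hit disjoint_groups assms(2) by (intro inj_onI) (metis disjoint_iff lessThan_iff mem_Collect_eq)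
  moreover have "hit ` {..<q} \<subseteq> down_arrivals es v"
    using hit group_down_edges assms(2) by (force simp: down_arrivals_def)
  moreover have "finite (down_arrivals es v)"
    by (rule finite_subset[of _ "{..<phase_end (rank v)}"]) (auto simp: down_arrivals_def)
  ultimately show ?thesis by (metis card_image card_lessThan card_mono)
qed

lemma below_rank_imp_loses_ties:
  assumes es: "es \<in> permutations_of_set E" "es \<notin> bad_orders" and qr: "L - 1 + r \<le> q"
    and xs: "xs \<in> set_pmf (greedy_choices es (\<lambda>_. 0))"
    and v: "v \<in> ranked" "loads (\<lambda>_. 0) xs (length xs) v < rank v"
  shows "xs \<in> (\<Union>u\<in>ranked. loses_ties (\<lambda>_. 0) es u (down_arrivals es u) r)"
proof (rule ccontr)
  assume not_lost: "xs \<notin> (\<Union>u\<in>ranked. loses_ties (\<lambda>_. 0) es u (down_arrivals es u) r)"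
  have len: "length es = card E" and "set es = E"
    using es(1) by (auto simp: length_finite_permutations_of_set permutations_of_set_def)
  then have "\<forall>e\<in>set es. finite e \<and> e \<noteq> {}"
    using card_edge by (metis card.infinite card.empty zero_neq_numeral)
  then have greedy: "length xs = length es"
    "\<forall>i<length es. xs ! i \<in> least_loaded (es ! i) (loads (\<lambda>_. 0) xs i)"
    using greedy_choices_least_loaded[OF xs] by auto
  have "rank v \<le> loads (\<lambda>_. 0) xs (phase_end (rank v)) v"
    using card_down_arrivals_ge[OF es(2)] qr not_lost v(1)
    by (intro rank_le_loads[where r=r, OF greedy(2,1) len]) force+
  also have "\<dots> \<le> loads (\<lambda>_. 0) xs (length xs) v"
    using phase_end_le[of "rank v"] v(1) greedy(1) len by (intro loads_mono) simp
  finally show False using v(2) by simp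
qed

lemma prob_below_rank_given_order_le:
  assumes es: "es \<in> permutations_of_set E" "es \<notin> bad_orders" and qr: "L - 1 + r \<le> q"
  shows "measure_pmf.prob (greedy_choices es (\<lambda>_. 0))
           {xs. \<exists>v\<in>ranked. loads (\<lambda>_. 0) xs (length xs) v < rank v} \<le> card ranked * (1/2) ^ r"
proof -
  have "measure_pmf.prob (greedy_choices es (\<lambda>_. 0))
           {xs. \<exists>v\<in>ranked. loads (\<lambda>_. 0) xs (length xs) v < rank v}
      \<le> measure_pmf.prob (greedy_choices es (\<lambda>_. 0))
           (\<Union>v\<in>ranked. loses_ties (\<lambda>_. 0) es v (down_arrivals es v) r)"
    using below_rank_imp_loses_ties[OF es qr]
    by (subst measure_Int_set_pmf[symmetric]) (rule measure_pmf.finite_measure_mono, auto)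
  also have "\<dots> \<le> card ranked * (1/2) ^ r"
  proof (rule prob_UN_le[OF finite_ranked])
    fix v assume "v \<in> ranked"
    then have "down_arrivals es v \<subseteq> {..<length es}"
      using phase_end_le[of "rank v"] es(1)
      by (auto simp: down_arrivals_def length_finite_permutations_of_set)
    then show "measure_pmf.prob (greedy_choices es (\<lambda>_. 0))
        (loses_ties (\<lambda>_. 0) es v (down_arrivals es v) r) \<le> (1/2) ^ r"
      by (rule prob_loses_ties_le)
  qed
  finally show ?thesis .
qed

theorem prob_below_rank_le:
  assumes "L - 1 + r \<le> q"
  shows "measure_pmf.prob (greedy_random_order E) {l. \<exists>v\<in>ranked. l v < rank v}
           \<le> card ranked * (q * (1 - real s / real (card E)) ^ (card E div L) + (1/2) ^ r)"
proof -
  let ?perm = "pmf_of_set (permutations_of_set E)"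
  define f where "f es = measure_pmf.prob (greedy_choices es (\<lambda>_. 0))
      {xs. \<exists>v\<in>ranked. loads (\<lambda>_. 0) xs (length xs) v < rank v}" for es
  have set_perm: "set_pmf ?perm = permutations_of_set E" and fin: "finite (set_pmf ?perm)"
    using finite_E by (simp_all add: permutations_of_set_empty_iff finite_permutations_of_set)
  have f_le: "f es \<le> indicator bad_orders es + card ranked * (1/2) ^ r"
    if "es \<in> permutations_of_set E" for es
    using prob_below_rank_given_order_le[OF that _ assms] measure_pmf.prob_le_1[of _ "{xs. _}"]
    by (cases "es \<in> bad_orders") (auto simp: f_def intro: add_increasing2)
  have "measure_pmf.prob (greedy_random_order E) {l. \<exists>v\<in>ranked. l v < rank v} =
      measure_pmf.expectation ?perm f"
    unfolding greedy_random_order_def prob_bind_pmf f_def greedy_run_conv_choices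
    by (simp add: measure_map_pmf vimage_def)
  also have "\<dots> \<le> measure_pmf.expectation ?perm (\<lambda>es. indicator bad_orders es + card ranked * (1/2) ^ r)"
    using f_le by (intro integral_mono_AE) (auto intro!: integrable_measure_pmf_finite[OF fin] AE_pmfI simp: set_perm)
  also have "\<dots> = measure_pmf.prob ?perm bad_orders + card ranked * (1/2) ^ r"
    by (subst Bochner_Integration.integral_add) (auto intro!: integrable_measure_pmf_finite[OF fin])
  also have "\<dots> \<le> card ranked * (q * (1 - real s / real (card E)) ^ (card E div L) + (1/2) ^ r)"
    using prob_bad_orders_le by (simp add: distrib_left)
  finally show ?thesis .
qed

end

section \<open>The tree family\<close>

text \<open>The vertex \<open>(d, i)\<close>, the \<open>i\<close>-th vertex at depth \<open>d\<close> of the complete \<open>arity k\<close>-ary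
  tree, is encoded as the number \<open>prod_encode (d, i)\<close>; its children are split into
  \<open>group_count k\<close> consecutive groups of \<open>group_size k\<close>. The parameters are chosen so that
  \<open>arity k \<le> 2 ^ arity_exp k\<close>, hence \<open>n \<le> 2 ^ ((arity_exp k + 1) * depth k)\<close> vertices; then
  \<open>tie_count k\<close> makes \<open>n * 2 ^ - tie_count k \<le> 2 ^ - depth k\<close>, \<open>group_count k\<close> leaves room
  for \<open>depth k - 1 + tie_count k\<close> hit groups, and \<open>group_size k\<close> makes a group missed in a
  phase with probability below \<open>2 ^ - tie_count k / group_count k\<close>.\<close>

definition depth :: "nat \<Rightarrow> nat" where
  "depth k = 2 ^ (k + 6)"

definition arity_exp :: "nat \<Rightarrow> nat" where
  "arity_exp k = 5 * (k + 6)"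

definition tie_count :: "nat \<Rightarrow> nat" where
  "tie_count k = (arity_exp k + 2) * depth k"

definition group_count :: "nat \<Rightarrow> nat" where
  "group_count k = depth k + tie_count k"

definition group_size :: "nat \<Rightarrow> nat" where
  "group_size k = depth k * ((arity_exp k + 2) * depth k + group_count k + 2)"

definition arity :: "nat \<Rightarrow> nat" where
  "arity k = group_count k * group_size k"

definition node_depth :: "nat \<Rightarrow> nat" where
  "node_depth x = fst (prod_decode x)"

definition node_index :: "nat \<Rightarrow> nat" where
  "node_index x = snd (prod_decode x)"

definition tree_vertices :: "nat \<Rightarrow> nat set" where
  "tree_vertices k = prod_encode ` {(d, i). d \<le> depth k \<and> i < arity k ^ d}"

definition tree_root :: nat where
  "tree_root = prod_encode (0, 0)"

definition tree_parent :: "nat \<Rightarrow> nat \<Rightarrow> nat" where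
  "tree_parent k x = prod_encode (node_depth x - 1, node_index x div arity k)"

definition tree_edges :: "nat \<Rightarrow> nat set set" where
  "tree_edges k = (\<lambda>x. {x, tree_parent k x}) ` (tree_vertices k - {tree_root})"

definition tree_child :: "nat \<Rightarrow> nat \<Rightarrow> nat \<Rightarrow> nat" where
  "tree_child k v t = prod_encode (node_depth v + 1, node_index v * arity k + t)"

text \<open>Vertices outside the tree get a rank above \<open>depth k\<close>, so they are not ranked.\<close>

definition tree_rank :: "nat \<Rightarrow> nat \<Rightarrow> nat" where
  "tree_rank k x = (if x \<in> tree_vertices k then depth k - node_depth x else depth k + 1)"

definition child_group :: "nat \<Rightarrow> nat \<Rightarrow> nat \<Rightarrow> nat set set" where
  "child_group k v g =
     (\<lambda>t. {tree_child k v t, v}) ` {g * group_size k ..< (g + 1) * group_size k}"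

lemma node_depth_encode [simp]: "node_depth (prod_encode (d, i)) = d"
  and node_index_encode [simp]: "node_index (prod_encode (d, i)) = i"
  by (simp_all add: node_depth_def node_index_def)

lemma prod_encode_node: "prod_encode (node_depth x, node_index x) = x"
  by (simp add: node_depth_def node_index_def)

lemma mem_tree_vertices: "x \<in> tree_vertices k \<longleftrightarrow> node_depth x \<le> depth k \<and> node_index x < arity k ^ node_depth x"
proof
  assume "node_depth x \<le> depth k \<and> node_index x < arity k ^ node_depth x"
  then have "(node_depth x, node_index x) \<in> {(d, i). d \<le> depth k \<and> i < arity k ^ d}" by simp
  then show "x \<in> tree_vertices k" unfolding tree_vertices_def using prod_encode_node[of x] by (metis image_eqI)
qed (auto simp: tree_vertices_def)

lemma depth_pos: "0 < depth k"
  by (simp add: depth_def)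

lemma arity_ge_4: "4 \<le> arity k"
proof -
  have "2 \<le> group_count k" "2 \<le> group_size k"
    using depth_pos[of k] by (simp_all add: group_count_def tie_count_def group_size_def)
  then show ?thesis unfolding arity_def using mult_le_mono by fastforce
qed

lemma tree_vertices_subset: "tree_vertices k \<subseteq> prod_encode ` ({..depth k} \<times> {..<arity k ^ depth k})"
proof -
  have "arity k ^ d \<le> arity k ^ depth k" if "d \<le> depth k" for d
    using that arity_ge_4[of k] by (intro power_increasing) auto
  then show ?thesis by (fastforce simp: tree_vertices_def)
qed

lemma finite_tree_vertices: "finite (tree_vertices k)"
  using tree_vertices_subset by (rule finite_subset) auto

lemma tree_root_in: "tree_root \<in> tree_vertices k"
  by (simp add: mem_tree_vertices tree_root_def)

lemma tree_parent_in:
  assumes "x \<in> tree_vertices k" "x \<noteq> tree_root"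
  shows "tree_parent k x \<in> tree_vertices k \<and> node_depth (tree_parent k x) < node_depth x"
proof -
  obtain d where d: "node_depth x = Suc d"
    using assms prod_encode_node[of x] by (cases "node_depth x") (auto simp: mem_tree_vertices tree_root_def)
  then have "node_index x < arity k * arity k ^ d" using assms(1) by (simp add: mem_tree_vertices)
  then have "node_index x div arity k < arity k ^ d"
    using arity_ge_4[of k] by (simp add: div_less_iff_less_mult mult.commute)
  then show ?thesis using assms(1) d by (simp add: tree_parent_def mem_tree_vertices)
qed

lemma is_tree_tree: "is_tree (tree_vertices k) (tree_edges k)"
  unfolding tree_edges_def
  by (rule is_tree_parent_edges[OF _ finite_tree_vertices tree_root_in, where height=node_depth])
     (use tree_parent_in in blast)

lemma tree_child:
  assumes "v \<in> tree_vertices k" "node_depth v < depth k" "t < arity k"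
  shows "tree_child k v t \<in> tree_vertices k" "tree_child k v t \<noteq> tree_root"
    "tree_parent k (tree_child k v t) = v" "{tree_child k v t, v} \<in> tree_edges k"
proof -
  have "node_index v * arity k + t < (node_index v + 1) * arity k" using assms(3) by simp
  also have "\<dots> \<le> arity k ^ node_depth v * arity k"
    using assms(1) by (intro mult_right_mono) (auto simp: mem_tree_vertices)
  finally show child: "tree_child k v t \<in> tree_vertices k"
    using assms(2) by (simp add: tree_child_def mem_tree_vertices mult.commute)
  show root: "tree_child k v t \<noteq> tree_root" by (simp add: tree_child_def tree_root_def)
  show parent: "tree_parent k (tree_child k v t) = v"
    using assms(3) by (simp add: tree_child_def tree_parent_def prod_encode_node)
  show "{tree_child k v t, v} \<in> tree_edges k"
    using child root parent[symmetric] by (auto simp: tree_edges_def)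
qed

lemma tree_child_inj: "tree_child k v t = tree_child k v t' \<Longrightarrow> t = t'"
  by (simp add: tree_child_def prod_encode_eq)

lemma tree_child_neq: "tree_child k v t \<noteq> v"
proof
  assume "tree_child k v t = v"
  then have "node_depth (tree_child k v t) = node_depth v" by simp
  then show False by (simp add: tree_child_def)
qed

lemma tree_rank_ranked:
  assumes "1 \<le> tree_rank k v" "tree_rank k v \<le> depth k"
  shows "v \<in> tree_vertices k" "node_depth v < depth k"
  using assms by (auto simp: tree_rank_def split: if_splits)

lemma group_lt_arity:
  assumes "t < (g + 1) * group_size k" "g < group_count k"
  shows "t < arity k"
proof -
  have "(g + 1) * group_size k \<le> group_count k * group_size k"
    using assms(2) by (intro mult_right_mono) auto
  then show ?thesis using assms(1) by (simp add: arity_def)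
qed

lemma child_group_edge:
  assumes "v \<in> tree_vertices k" "node_depth v < depth k" "g < group_count k" "e \<in> child_group k v g"
  shows "e \<in> tree_edges k \<and> (\<exists>c. e = {v, c} \<and> c \<noteq> v \<and> tree_rank k c = tree_rank k v - 1)"
proof -
  obtain t where "t < (g + 1) * group_size k" "e = {tree_child k v t, v}"
    using assms(4) by (auto simp: child_group_def)
  then have t: "t < arity k" "e = {tree_child k v t, v}" using group_lt_arity assms(3) by auto
  have "tree_rank k (tree_child k v t) = tree_rank k v - 1"
    using tree_child(1)[OF assms(1,2) t(1)] assms(1) by (simp add: tree_rank_def tree_child_def)
  then show ?thesis using tree_child(4)[OF assms(1,2) t(1)] tree_child_neq t(2) by blast
qed

lemma card_child_group: "card (child_group k v g) = group_size k"
proof -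
  have "inj_on (\<lambda>t. {tree_child k v t, v}) {g * group_size k ..< (g + 1) * group_size k}"
    using tree_child_neq by (intro inj_onI) (metis doubleton_eq_iff tree_child_inj)
  then show ?thesis by (simp add: child_group_def card_image)
qed

lemma disjoint_child_groups:
  assumes "g \<noteq> g'"
  shows "child_group k v g \<inter> child_group k v g' = {}"
proof (rule equals0I)
  fix e assume "e \<in> child_group k v g \<inter> child_group k v g'"
  then obtain t t' where t: "t \<in> {g * group_size k ..< (g + 1) * group_size k}"
    "t' \<in> {g' * group_size k ..< (g' + 1) * group_size k}" "{tree_child k v t, v} = {tree_child k v t', v}"
    by (auto simp: child_group_def)
  then have "t = t'" using tree_child_neq by (metis doubleton_eq_iff tree_child_inj)
  then have "t div group_size k = g" "t div group_size k = g'"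
    using t(1,2) by (auto intro!: div_nat_eqI simp: mult.commute)
  then show False using assms by simp
qed

lemma ranked_edge_groups_tree:
  "ranked_edge_groups (tree_edges k) (tree_rank k) (depth k)
     (child_group k) (group_count k) (group_size k)"
proof unfold_locales
  show "finite (tree_edges k)" by (simp add: tree_edges_def finite_tree_vertices)
  show "card e = 2" if "e \<in> tree_edges k" for e
    using is_tree_tree[of k] that by (auto simp: is_tree_def simple_graph_def)
  show "0 < depth k" by (rule depth_pos)
  show "finite {v. 1 \<le> tree_rank k v \<and> tree_rank k v \<le> depth k}"
    by (rule finite_subset[OF _ finite_tree_vertices]) (use tree_rank_ranked(1) in blast)
next
  fix v g assume v: "1 \<le> tree_rank k v" "tree_rank k v \<le> depth k" and g: "g < group_count k"
  show "e \<in> tree_edges k \<and> (\<exists>c. e = {v, c} \<and> c \<noteq> v \<and> tree_rank k c = tree_rank k v - 1)"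
    if "e \<in> child_group k v g" for e
    by (rule child_group_edge[OF tree_rank_ranked(1)[OF v] tree_rank_ranked(2)[OF v] g that])
  show "group_size k \<le> card (child_group k v g)" by (simp add: card_child_group)
  show "child_group k v g \<inter> child_group k v g' = {}" if "g' < group_count k" "g \<noteq> g'" for g'
    using that(2) by (rule disjoint_child_groups)
qed

section \<open>Estimates\<close>

lemma poly_le_four_pow: "6 \<le> j \<Longrightarrow> (5 * j + 3) * (10 * j + 7) \<le> (4::nat) ^ j"
proof (induction j rule: dec_induct)
  case (step n)
  have "(5 * Suc n + 3) * (10 * Suc n + 7) \<le> 4 * ((5 * n + 3) * (10 * n + 7))"
    using step.hyps by (simp add: algebra_simps)
  also have "\<dots> \<le> 4 * 4 ^ n" using step.IH by simp
  finally show ?case by simp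
qed simp

lemma arity_le: "arity k \<le> 2 ^ arity_exp k"
proof -
  define L where "L = depth k"
  define a where "a = arity_exp k"
  have "arity k = ((a + 3) * L) * (L * ((2 * a + 5) * L + 2))"
    by (simp add: arity_def group_count_def group_size_def tie_count_def L_def a_def algebra_simps)
  also have "\<dots> \<le> ((a + 3) * L) * (L * ((2 * a + 5) * L + 2 * L))"
    using depth_pos[of k] by (intro mult_left_mono add_left_mono) (auto simp: L_def)
  also have "\<dots> = (a + 3) * (2 * a + 7) * L ^ 3"
    by (simp add: algebra_simps power3_eq_cube)
  also have "L ^ 3 = (2 ^ 3) ^ (k + 6)"
    unfolding L_def depth_def by (simp only: power_mult[symmetric] mult.commute)
  also have "(a + 3) * (2 * a + 7) = (5 * (k + 6) + 3) * (10 * (k + 6) + 7)"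
    by (simp add: a_def arity_exp_def)
  also have "\<dots> * (2 ^ 3) ^ (k + 6) \<le> 4 ^ (k + 6) * (2 ^ 3) ^ (k + 6)"
    using poly_le_four_pow[of "k + 6"] by (intro mult_right_mono) simp_all
  also have "\<dots> = (2 ^ 5) ^ (k + 6)"
    by (simp only: power_mult_distrib[symmetric]) simp
  also have "\<dots> = 2 ^ a"
    by (simp only: a_def arity_exp_def power_mult)
  finally show ?thesis by (simp add: a_def)
qed

lemma card_tree_vertices_ge: "arity k ^ depth k \<le> card (tree_vertices k)"
proof -
  have "prod_encode ` ({depth k} \<times> {..<arity k ^ depth k}) \<subseteq> tree_vertices k"
    by (auto simp: tree_vertices_def)
  from card_mono[OF finite_tree_vertices this] show ?thesis
    by (simp add: card_image inj_on_def prod_encode_eq card_cartesian_product)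
qed

lemma card_tree_vertices_le: "card (tree_vertices k) \<le> 2 ^ ((arity_exp k + 1) * depth k)"
proof -
  have "card (tree_vertices k) \<le> card (prod_encode ` ({..depth k} \<times> {..<arity k ^ depth k}))"
    by (rule card_mono[OF _ tree_vertices_subset]) simp
  also have "\<dots> \<le> card ({..depth k} \<times> {..<arity k ^ depth k})"
    by (rule card_image_le) simp
  also have "\<dots> = (depth k + 1) * arity k ^ depth k" by (simp add: card_cartesian_product)
  also have "\<dots> \<le> 2 ^ depth k * (2 ^ arity_exp k) ^ depth k"
    using arity_le[of k] by (intro mult_le_mono power_mono) (simp_all add: Suc_le_eq less_exp)
  also have "\<dots> = 2 ^ ((arity_exp k + 1) * depth k)"
    by (simp add: power_mult[symmetric] power_add algebra_simps)
  finally show ?thesis .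
qed

lemma one_minus_pow_le_exp:
  fixes s m L :: nat
  assumes "s \<le> m" "0 < m" "0 < L"
  shows "(1 - real s / real m) ^ (m div L) \<le> exp (1 - real s / real L)"
proof -
  define x where "x = real s / real m"
  have x: "0 \<le> x" "x \<le> 1" using assms by (auto simp: x_def field_simps)
  have "(1 - x) ^ (m div L) \<le> exp (- x) ^ (m div L)"
    using x exp_minus_ge[of x] by (intro power_mono) auto
  also have "\<dots> = exp (- x * real (m div L))" by (rule exp_of_nat2_mult[symmetric])
  also have "\<dots> \<le> exp (1 - real s / real L)"
  proof -
    have "real m < real (m div L) * real L + real L"
      using assms(3) mod_less_divisor[of L m] div_mult_mod_eq[of m L] by (metis of_nat_add of_nat_less_iff
          of_nat_mult add_less_cancel_left)
    then have "real m / real L - 1 \<le> real (m div L)" using assms(3) by (simp add: field_simps)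
    from mult_left_mono[OF this x(1)] have "x * (real m / real L - 1) \<le> x * real (m div L)" .
    moreover have "x * (real m / real L - 1) = real s / real L - x"
      using assms by (simp add: x_def field_simps)
    ultimately show ?thesis using x by simp
  qed
  finally show ?thesis by (simp add: x_def)
qed

lemma exp_minus_le_half_pow: "exp (- real n) \<le> (1/2) ^ n"
proof -
  have "exp (- real n) = exp (-1) ^ n" by (simp add: exp_of_nat2_mult[symmetric])
  also have "\<dots> \<le> (1/2) ^ n"
    using exp_ge_add_one_self[of 1] by (intro power_mono) (simp_all add: exp_minus field_simps)
  finally show ?thesis .
qed

lemma group_size_le_card_tree_edges: "group_size k \<le> card (tree_edges k)"
proof -
  have "node_depth tree_root < depth k" "0 < group_count k"
    using depth_pos[of k] by (simp_all add: tree_root_def group_count_def)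
  then have "child_group k tree_root 0 \<subseteq> tree_edges k"
    using child_group_edge[OF tree_root_in] by blast
  from card_mono[OF _ this] show ?thesis
    by (simp add: card_child_group tree_edges_def finite_tree_vertices)
qed

lemma group_count_mult_miss_le:
  "real (group_count k) * (1 - real (group_size k) / real (card (tree_edges k))) ^ (card (tree_edges k) div depth k)
     \<le> (1/2) ^ tie_count k"
proof -
  define L where "L = depth k"
  define q where "q = group_count k"
  define X where "X = tie_count k"
  have L_pos: "0 < L" using depth_pos by (simp add: L_def)
  have "group_size k = L * (X + q + 2)"
    by (simp add: group_size_def tie_count_def X_def q_def L_def)
  then have "real (group_size k) / real L = real (X + q + 2)"
    using L_pos by (simp only: of_nat_mult) simp
  moreover have "0 < card (tree_edges k)"
    using group_size_le_card_tree_edges[of k] L_pos by (simp add: group_size_def L_def)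
  ultimately have "(1 - real (group_size k) / real (card (tree_edges k))) ^ (card (tree_edges k) div L)
      \<le> exp (1 - real (X + q + 2))"
    using one_minus_pow_le_exp[OF group_size_le_card_tree_edges[of k] _ L_pos] by simp
  also have "1 - real (X + q + 2) = - real q + - real X + - 1" by simp
  also have "exp \<dots> = exp (- real q) * exp (- real X) * exp (- 1)" by (simp only: exp_add)
  finally have "real q * (1 - real (group_size k) / real (card (tree_edges k))) ^ (card (tree_edges k) div L)
      \<le> (real q * exp (- real q)) * exp (- real X) * exp (- 1)"
    by (simp add: mult_left_mono mult.assoc)
  also have "\<dots> \<le> 1 * exp (- real X) * 1"
  proof (intro mult_mono)
    have "real q \<le> exp (real q)" using exp_ge_add_one_self[of "real q"] by linarith
    then show "real q * exp (- real q) \<le> 1" by (simp add: exp_minus field_simps)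
  qed simp_all
  also have "\<dots> \<le> (1/2) ^ X" using exp_minus_le_half_pow by simp
  finally show ?thesis by (simp add: L_def q_def X_def)
qed

lemma prob_root_below_depth_le:
  "measure_pmf.prob (greedy_random_order (tree_edges k)) {l. l tree_root < depth k}
     \<le> 2 * (1/2) ^ depth k"
proof -
  interpret ranked_edge_groups "tree_edges k" "tree_rank k" "depth k"
    "child_group k" "group_count k" "group_size k"
    by (rule ranked_edge_groups_tree)
  define L where "L = depth k"
  define a where "a = arity_exp k"
  define m where "m = card (tree_edges k)"
  have root: "tree_rank k tree_root = L" "tree_root \<in> ranked"
    using tree_root_in depth_pos[of k] by (simp_all add: tree_rank_def tree_root_def L_def)
  have "card ranked \<le> card (tree_vertices k)"
    by (rule card_mono[OF finite_tree_vertices]) (use tree_rank_ranked(1) in blast)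
  then have N: "real (card ranked) \<le> 2 ^ ((a + 1) * L)"
    using card_tree_vertices_le[of k] by (simp add: a_def L_def)
  have "0 \<le> 1 - real (group_size k) / real m"
    using group_size_le_card_tree_edges[of k] by (cases "m = 0") (simp_all add: m_def field_simps)
  have "measure_pmf.prob (greedy_random_order (tree_edges k)) {l. l tree_root < depth k}
      \<le> measure_pmf.prob (greedy_random_order (tree_edges k)) {l. \<exists>v\<in>ranked. l v < tree_rank k v}"
  proof (intro measure_pmf.finite_measure_mono subsetI)
    fix l assume "l \<in> {l. l tree_root < depth k}"
    then show "l \<in> {l. \<exists>v\<in>ranked. l v < tree_rank k v}"
      using root by (intro CollectI bexI[of _ tree_root]) (simp_all add: L_def)
  qed simp
  also have "\<dots> \<le> card ranked *
      (group_count k * (1 - real (group_size k) / real m) ^ (m div L) + (1/2) ^ tie_count k)"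
    using prob_below_rank_le[of "tie_count k"] by (simp add: m_def L_def group_count_def)
  also have "\<dots> \<le> 2 ^ ((a + 1) * L) * (2 * (1/2) ^ ((a + 2) * L))"
    using group_count_mult_miss_le[of k] \<open>0 \<le> 1 - real (group_size k) / real m\<close>
    by (intro mult_mono[OF N]) (simp_all add: tie_count_def a_def L_def m_def)
  also have "\<dots> = 2 * ((2 * (1/2)) ^ ((a + 1) * L) * (1/2) ^ L)"
    unfolding power_mult_distrib by (simp add: power_add[symmetric] algebra_simps)
  also have "\<dots> = 2 * (1/2) ^ L" by simp
  finally show ?thesis by (simp add: L_def)
qed

lemma log_ratio_le_depth:
  "1/6 * ln (real (card (tree_vertices k))) / ln (ln (real (card (tree_vertices k)))) \<le> depth k"
proof -
  define n where "n = real (card (tree_vertices k))"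
  define L where "L = depth k"
  define a where "a = arity_exp k"
  have L_pos: "0 < real L" using depth_pos by (simp add: L_def)
  have "(4::nat) ^ L \<le> arity k ^ L" using arity_ge_4 by (intro power_mono) auto
  then have four: "4 ^ L \<le> n" using card_tree_vertices_ge[of k] by (simp add: n_def L_def)
  then have n_pos: "0 < n" by (rule order_less_le_trans[rotated]) simp
  have "real L * 1 \<le> real L * ln 4"
    using ln_ge_iff[of 4 1] exp_le by (intro mult_left_mono) auto
  also have "\<dots> = ln (4 ^ L)" by (simp add: ln_realpow)
  also have "\<dots> \<le> ln n" using four n_pos by simp
  finally have L_le: "real L \<le> ln n" by simp
  have "real (k + 6) * ln 2 = ln (real L)" by (simp add: L_def depth_def ln_realpow)
  also have "\<dots> \<le> ln (ln n)" using L_le L_pos by simp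
  finally have lnln: "real (k + 6) * ln 2 \<le> ln (ln n)" .
  have "ln n \<le> ln (2 ^ ((a + 1) * L))"
    using card_tree_vertices_le[of k] n_pos by (simp add: n_def a_def L_def)
  then have ln_le: "ln n \<le> real ((a + 1) * L) * ln 2" by (simp add: ln_realpow)
  have "ln n / ln (ln n) \<le> (real ((a + 1) * L) * ln 2) / (real (k + 6) * ln 2)"
    using L_le lnln ln_le L_pos by (intro frac_le) auto
  also have "\<dots> = real ((a + 1) * L) / real (k + 6)" by simp
  also have "\<dots> \<le> real (6 * (k + 6) * L) / real (k + 6)"
  proof (intro divide_right_mono of_nat_mono)
    show "(a + 1) * L \<le> 6 * (k + 6) * L" by (intro mult_right_mono) (simp_all add: a_def arity_exp_def)
  qed simp
  also have "\<dots> = 6 * real L" by (simp add: field_simps)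
  finally show ?thesis by (simp add: n_def L_def)
qed

lemma le_depth: "k \<le> depth k"
proof -
  have "k < 2 ^ k" by (rule less_exp)
  also have "(2::nat) ^ k \<le> 2 ^ (k + 6)" by (rule power_increasing) simp_all
  finally show ?thesis by (simp add: depth_def)
qed

lemma prob_max_load_ge:
  "1 - 2 * (1/2) ^ k \<le> measure_pmf.prob (greedy_random_order (tree_edges k))
     {l. real (max_load (tree_vertices k) l) \<ge>
           1/6 * ln (real (card (tree_vertices k))) / ln (ln (real (card (tree_vertices k))))}"
proof -
  let ?p = "greedy_random_order (tree_edges k)"
  have "UNIV - {l. l tree_root < depth k} \<subseteq>
      {l. real (max_load (tree_vertices k) l) \<ge>
           1/6 * ln (real (card (tree_vertices k))) / ln (ln (real (card (tree_vertices k))))}"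
  proof
    fix l assume "l \<in> UNIV - {l. l tree_root < depth k}"
    moreover have "l tree_root \<le> max_load (tree_vertices k) l"
      unfolding max_load_def by (rule Max_ge) (simp_all add: finite_tree_vertices tree_root_in)
    ultimately have "depth k \<le> max_load (tree_vertices k) l" by simp
    then show "l \<in> {l. real (max_load (tree_vertices k) l) \<ge>
           1/6 * ln (real (card (tree_vertices k))) / ln (ln (real (card (tree_vertices k))))}"
      using log_ratio_le_depth[of k] by simp
  qed
  then have "measure_pmf.prob ?p (UNIV - {l. l tree_root < depth k}) \<le> measure_pmf.prob ?p
     {l. real (max_load (tree_vertices k) l) \<ge>
           1/6 * ln (real (card (tree_vertices k))) / ln (ln (real (card (tree_vertices k))))}"
    by (intro measure_pmf.finite_measure_mono) simp_all
  moreover have "(1/2::real) ^ depth k \<le> (1/2) ^ k"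
    using le_depth[of k] by (simp add: power_decreasing)
  moreover have "measure_pmf.prob ?p (UNIV - {l. l tree_root < depth k})
      = 1 - measure_pmf.prob ?p {l. l tree_root < depth k}"
    using measure_pmf.prob_compl[of "{l. l tree_root < depth k}" ?p] by simp
  ultimately show ?thesis using prob_root_below_depth_le[of k] by linarith
qed

lemma depth_le_card_tree_vertices: "depth k \<le> card (tree_vertices k)"
proof -
  have "depth k < 2 ^ depth k" by (rule less_exp)
  also have "(2::nat) ^ depth k \<le> arity k ^ depth k" using arity_ge_4[of k] by (intro power_mono) simp_all
  also have "\<dots> \<le> card (tree_vertices k)" by (rule card_tree_vertices_ge)
  finally show ?thesis by simp
qed

theorem mainTheorem2:
  "\<exists>(c::real) > 0. \<exists>(V :: nat \<Rightarrow> nat set) (E :: nat \<Rightarrow> nat set set).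
     (\<forall>k. is_tree (V k) (E k)) \<and>
     filterlim (\<lambda>k. card (V k)) at_top sequentially \<and>
     ((\<lambda>k. measure_pmf.prob (greedy_random_order (E k))
          {l. real (max_load (V k) l) \<ge>
                c * ln (real (card (V k))) / ln (ln (real (card (V k))))})
       \<longlonglongrightarrow> 1)"
proof (intro exI conjI allI)
  show "(0::real) < 1/6" by simp
  show "is_tree (tree_vertices k) (tree_edges k)" for k by (rule is_tree_tree)
  have "k \<le> card (tree_vertices k)" for k
    by (rule le_trans[OF le_depth depth_le_card_tree_vertices])
  then show "filterlim (\<lambda>k. card (tree_vertices k)) at_top sequentially"
    by (intro filterlim_at_top_mono[OF filterlim_ident]) auto
  have "(\<lambda>k. 1 - 2 * (1/2::real) ^ k) \<longlonglongrightarrow> 1 - 2 * 0"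
    by (intro tendsto_diff tendsto_const tendsto_mult LIMSEQ_power_zero) simp
  then have lim: "(\<lambda>k. 1 - 2 * (1/2::real) ^ k) \<longlonglongrightarrow> 1" by simp
  show "(\<lambda>k. measure_pmf.prob (greedy_random_order (tree_edges k))
      {l. real (max_load (tree_vertices k) l) \<ge>
           1/6 * ln (real (card (tree_vertices k))) / ln (ln (real (card (tree_vertices k))))}) \<longlonglongrightarrow> 1"
    (is "?prob \<longlonglongrightarrow> 1")
  proof (rule tendsto_sandwich[OF _ _ lim tendsto_const])
    show "\<forall>\<^sub>F k in sequentially. 1 - 2 * (1/2) ^ k \<le> ?prob k"
      by (intro always_eventually allI prob_max_load_ge)
    show "\<forall>\<^sub>F k in sequentially. ?prob k \<le> 1" by simp
  qed
qed

end
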